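(* Let $[n]=\{1,\dots,n\}$ be a set of items, let $\boldsymbol\theta=(\boldsymbol\theta_1,\dots,\boldsymbol\theta_n)$ be a vector of independent non-negative real random variables, let $f:\mathbb{R}^n_{\ge 0}\to\mathbb{R}_{\ge 0}$ be a monotone submodular value function, and let $k\in[n]$. Let $S_0:=\emptyset$ and, for $t=1,\dots,k$, let $S_t:=S_{t-1}\cup\{i_t\}$ where $i_t\in[n]\setminus S_{t-1}$ maximizes $\mathbb{E}_{\boldsymbol\theta}[f(\boldsymbol\theta(S_{t-1}\cup\{i\}))]$ over $i\in[n]\setminus S_{t-1}$ (non-adaptive greedy algorithm). Then $$\mathbb{E}_{\boldsymbol\theta}[f(\boldsymbol\theta(S_k))]\ \ge\ \frac12\left(1-\frac{1}{e^2}\right)\,OPT_A(k),$$ where $OPT_A(k)$ is the maximum, over all adaptive policies $\pi$, of $\mathbb{E}_{\boldsymbol\theta}[f(\boldsymbol\theta(U_{\boldsymbol\theta,k}(\pi)))]$. That is, the non-adaptive greedy algorithm is a $\frac12(1-\frac1{e^2})$-approximation algorithm for the stochastic monotone submodular maximization problem.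
   Context: A function $f:\mathbb{R}^n_{\ge0}\to\mathbb{R}_{\ge0}$ is a monotone submodular value function if it is non-decreasing in each coordinate and $f(x\vee y)+f(x\wedge y)\le f(x)+f(y)$ for all $x,y\in\mathbb{R}^n_{\ge0}$, where $\vee$ and $\wedge$ are the componentwise maximum and minimum. For $S\subseteq[n]$, the partial state $\boldsymbol\theta(S)$ is the random vector with $i$-th coordinate $\boldsymbol\theta_i$ if $i\in S$ and $0$ otherwise (it is understood that observing $\boldsymbol\theta(S)$ also reveals the set $S$). An adaptive policy $\pi$ starts with $U=\emptyset$ and, for $k$ steps, observes the partial state $\xi=\boldsymbol\theta(U)$ and adds to $U$ an item $\pi(\xi)\in[n]\setminus U$; the resulting random set of $k$ items is denoted $U_{\boldsymbol\theta,k}(\pi)$. The stochastic monotone submodular maximization problem asks for an adaptive policy maximizing $\mathbb{E}_{\boldsymbol\theta}[f(\boldsymbol\theta(U_{\boldsymbol\theta,k}(\pi)))]$. *)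

theory Defs
  imports "HOL-Probability.Probability"
begin

text \<open>Items are [n] = {1..n}. Vectors in R^n are extensional functions on {1..n}
  (the carrier of the product measure PiM {1..n}).\<close>

definition nonneg_vecs :: "nat \<Rightarrow> (nat \<Rightarrow> real) set" where
  "nonneg_vecs n = {x. x \<in> extensional {1..n} \<and> (\<forall>i\<in>{1..n}. 0 \<le> x i)}"

definition vjoin :: "nat \<Rightarrow> (nat \<Rightarrow> real) \<Rightarrow> (nat \<Rightarrow> real) \<Rightarrow> (nat \<Rightarrow> real)" where
  "vjoin n x y = (\<lambda>i\<in>{1..n}. max (x i) (y i))"

definition vmeet :: "nat \<Rightarrow> (nat \<Rightarrow> real) \<Rightarrow> (nat \<Rightarrow> real) \<Rightarrow> (nat \<Rightarrow> real)" where
  "vmeet n x y = (\<lambda>i\<in>{1..n}. min (x i) (y i))"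

definition monotone_submodular :: "nat \<Rightarrow> ((nat \<Rightarrow> real) \<Rightarrow> real) \<Rightarrow> bool" where
  "monotone_submodular n f \<longleftrightarrow>
     (\<forall>x\<in>nonneg_vecs n. 0 \<le> f x) \<and>
     (\<forall>x\<in>nonneg_vecs n. \<forall>y\<in>nonneg_vecs n. (\<forall>i\<in>{1..n}. x i \<le> y i) \<longrightarrow> f x \<le> f y) \<and>
     (\<forall>x\<in>nonneg_vecs n. \<forall>y\<in>nonneg_vecs n. f (vjoin n x y) + f (vmeet n x y) \<le> f x + f y)"

definition partial_state :: "nat \<Rightarrow> nat set \<Rightarrow> (nat \<Rightarrow> real) \<Rightarrow> (nat \<Rightarrow> real)" where
  "partial_state n S \<theta> = (\<lambda>i\<in>{1..n}. if i \<in> S then \<theta> i else 0)"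

text \<open>Joint law of the independent theta_i: product of the marginals M i.
  Expectations of non-negative quantities are taken in ennreal (possibly infinite).\<close>
definition expected_value ::
  "nat \<Rightarrow> (nat \<Rightarrow> real measure) \<Rightarrow> ((nat \<Rightarrow> real) \<Rightarrow> real) \<Rightarrow> nat set \<Rightarrow> ennreal" where
  "expected_value n M f S = (\<integral>\<^sup>+ \<theta>. ennreal (f (partial_state n S \<theta>)) \<partial>(PiM {1..n} M))"

text \<open>Adaptive policy: observes (U, theta(U)) and returns the next item.\<close>
primrec adaptive_set ::
  "(nat set \<times> (nat \<Rightarrow> real) \<Rightarrow> nat) \<Rightarrow> nat \<Rightarrow> (nat \<Rightarrow> real) \<Rightarrow> nat \<Rightarrow> nat set" where
  "adaptive_set \<pi> n \<theta> 0 = {}"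
| "adaptive_set \<pi> n \<theta> (Suc t) =
     insert (\<pi> (adaptive_set \<pi> n \<theta> t, partial_state n (adaptive_set \<pi> n \<theta> t) \<theta>))
            (adaptive_set \<pi> n \<theta> t)"

definition valid_policy :: "nat \<Rightarrow> nat \<Rightarrow> (nat set \<times> (nat \<Rightarrow> real) \<Rightarrow> nat) \<Rightarrow> bool" where
  "valid_policy n k \<pi> \<longleftrightarrow>
     (\<forall>U x. U \<subseteq> {1..n} \<and> card U < k \<longrightarrow> \<pi> (U, x) \<in> {1..n} - U)"

definition adaptive_value ::
  "nat \<Rightarrow> (nat \<Rightarrow> real measure) \<Rightarrow> ((nat \<Rightarrow> real) \<Rightarrow> real) \<Rightarrow> nat
     \<Rightarrow> (nat set \<times> (nat \<Rightarrow> real) \<Rightarrow> nat) \<Rightarrow> ennreal" where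
  "adaptive_value n M f k \<pi> =
     (\<integral>\<^sup>+ \<theta>. ennreal (f (partial_state n (adaptive_set \<pi> n \<theta> k) \<theta>)) \<partial>(PiM {1..n} M))"

text \<open>Policies whose outcome is a random variable (so that its expectation is defined).\<close>
definition admissible_policies ::
  "nat \<Rightarrow> (nat \<Rightarrow> real measure) \<Rightarrow> ((nat \<Rightarrow> real) \<Rightarrow> real) \<Rightarrow> nat
     \<Rightarrow> (nat set \<times> (nat \<Rightarrow> real) \<Rightarrow> nat) set" where
  "admissible_policies n M f k =
     {\<pi>. valid_policy n k \<pi> \<and>
          (\<lambda>\<theta>. f (partial_state n (adaptive_set \<pi> n \<theta> k) \<theta>)) \<in> borel_measurable (PiM {1..n} M)}"

definition OPT_A ::
  "nat \<Rightarrow> (nat \<Rightarrow> real measure) \<Rightarrow> ((nat \<Rightarrow> real) \<Rightarrow> real) \<Rightarrow> nat \<Rightarrow> ennreal" where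
  "OPT_A n M f k = (SUP \<pi>\<in>admissible_policies n M f k. adaptive_value n M f k \<pi>)"

text \<open>S 0, ..., S k is a run of the non-adaptive greedy algorithm (any tie-breaking).\<close>
definition is_nonadaptive_greedy ::
  "nat \<Rightarrow> (nat \<Rightarrow> real measure) \<Rightarrow> ((nat \<Rightarrow> real) \<Rightarrow> real) \<Rightarrow> nat \<Rightarrow> (nat \<Rightarrow> nat set) \<Rightarrow> bool" where
  "is_nonadaptive_greedy n M f k S \<longleftrightarrow>
     S 0 = {} \<and>
     (\<forall>t\<in>{1..k}. \<exists>i\<in>{1..n} - S (t - 1).
        S t = insert i (S (t - 1)) \<and>
        (\<forall>j\<in>{1..n} - S (t - 1).
           expected_value n M f (insert j (S (t - 1))) \<le> expected_value n M f (S t)))"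

end

(*
  Write F(T) for the expected value of f(theta(T)), fix a set S of items and a bound G on all the
  values F(S + {i}). Follow an adaptive policy step by step, conditioning on the coordinates it has
  revealed. Submodularity bounds its value by F(S) plus the expected value of f on S + U, where the
  revealed coordinates of U - S are kept and those of S are resampled; by diminishing returns each
  step of the policy raises this second term by at most G - F(S). Hence
  OPT_A(k) + k F(S) <= 2 F(S) + k G.
  For consecutive greedy sets this is the recurrence OPT_A(k) <= 2 a_t + k (a_(t+1) - a_t) with
  a_t = F(S_t): the gap OPT_A(k) - 2 a_t shrinks by the factor 1 - 2/k at each step, so after k
  steps it is at most e^(-2) OPT_A(k).
*)

theory Submission
  imports Defs
begin

lemma measurable_fun_upd_const:
  assumes "i \<in> I" and "y \<in> space (M i)"
  shows "(\<lambda>\<theta>. \<theta>(i := y)) \<in> measurable (PiM I M) (PiM I M)"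
  using assms by (intro measurable_fun_upd[where J = I]) auto

lemma nn_integral_PiM_fun_upd:
  fixes M :: "'i \<Rightarrow> 'a measure"
  assumes I: "finite I" "i \<in> I" and prob: "\<And>j. j \<in> I \<Longrightarrow> prob_space (M j)"
    and g[measurable]: "g \<in> borel_measurable (PiM I M)"
  shows "(\<lambda>y. \<integral>\<^sup>+\<theta>. g (\<theta>(i := y)) \<partial>PiM I M) \<in> borel_measurable (M i)"
    and "(\<integral>\<^sup>+y. \<integral>\<^sup>+\<theta>. g (\<theta>(i := y)) \<partial>PiM I M \<partial>M i) = (\<integral>\<^sup>+\<theta>. g \<theta> \<partial>PiM I M)"
proof -
  \<comment> \<open>the product locales require every factor, also those outside \<open>I\<close>, to be sigma-finite\<close>
  define M' where "M' j = (if j \<in> I then M j else return (count_space UNIV) undefined)" for j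
  have prob': "prob_space (M' j)" for j
    using prob by (simp add: M'_def prob_space_return)
  interpret product_sigma_finite M'
    using prob' by (simp add: product_sigma_finite_def prob_space_imp_sigma_finite)
  have M'_PiM: "PiM J M' = PiM J M" if "J \<subseteq> I" for J
    using that by (intro PiM_cong) (auto simp: M'_def)
  have M'_i: "M' i = M i" using I by (simp add: M'_def)
  have split: "integral\<^sup>N (PiM I M) h = (\<integral>\<^sup>+y. \<integral>\<^sup>+x. h (x(i := y)) \<partial>PiM (I - {i}) M \<partial>M i)"
    if h: "h \<in> borel_measurable (PiM I M)" for h
    using product_nn_integral_insert_rev[of "I - {i}" i h] I h
    by (simp add: insert_absorb M'_PiM M'_i)
  have restrict: "(\<integral>\<^sup>+\<theta>. g (\<theta>(i := y)) \<partial>PiM I M) = (\<integral>\<^sup>+x. g (x(i := y)) \<partial>PiM (I - {i}) M)"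
    if y: "y \<in> space (M i)" for y
  proof -
    have "(\<lambda>\<theta>. g (\<theta>(i := y))) \<in> borel_measurable (PiM I M)"
      using measurable_fun_upd_const[of i I y M] I(2) y by measurable
    then show ?thesis
      using split prob_space.emeasure_space_1[OF prob[OF I(2)]] by simp
  qed
  interpret finite_product_sigma_finite M' "I - {i}"
    by standard (use I in auto)
  have "g \<in> borel_measurable (PiM (insert i (I - {i})) M')"
    using I by (simp add: insert_absorb M'_PiM)
  then have "(\<lambda>y. \<integral>\<^sup>+x. g (x(i := y)) \<partial>PiM (I - {i}) M') \<in> borel_measurable (M' i)"
    by measurable
  then have "(\<lambda>y. \<integral>\<^sup>+x. g (x(i := y)) \<partial>PiM (I - {i}) M) \<in> borel_measurable (M i)"
    by (simp add: M'_PiM M'_i)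
  then show "(\<lambda>y. \<integral>\<^sup>+\<theta>. g (\<theta>(i := y)) \<partial>PiM I M) \<in> borel_measurable (M i)"
    by (rule measurable_cong[THEN iffD1, rotated]) (simp add: restrict)
  show "(\<integral>\<^sup>+y. \<integral>\<^sup>+\<theta>. g (\<theta>(i := y)) \<partial>PiM I M \<partial>M i) = (\<integral>\<^sup>+\<theta>. g \<theta> \<partial>PiM I M)"
    using split[OF g] by (auto intro!: nn_integral_cong simp: restrict)
qed

lemma recurrence_lower_bound:
  fixes \<alpha> :: "nat \<Rightarrow> real" and v c :: real
  assumes "0 < c" and "0 < k" and "0 \<le> v" and "0 \<le> \<alpha> 0"
    and mono: "\<And>t. t < k \<Longrightarrow> \<alpha> t \<le> \<alpha> (Suc t)"
    and step: "\<And>t. t < k \<Longrightarrow> v + k * \<alpha> t \<le> c * \<alpha> t + k * \<alpha> (Suc t)"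
  shows "(1 - exp (- c)) * v \<le> c * \<alpha> k"
proof -
  define q where "q = max 0 (1 - c / k)"
  have "q \<ge> 0" by (simp add: q_def)
  have gap: "v - c * \<alpha> t \<le> q ^ t * v" if "t \<le> k" for t
    using that
  proof (induction t)
    case 0
    then show ?case using \<open>0 < c\<close> \<open>0 \<le> \<alpha> 0\<close> by simp
  next
    case (Suc t)
    then have IH: "v - c * \<alpha> t \<le> q ^ t * v" by simp
    have "c * \<alpha> t \<le> c * \<alpha> (Suc t)"
      using mono[of t] Suc.prems \<open>0 < c\<close> by simp
    show ?case
    proof (cases "v - c * \<alpha> t \<le> 0")
      case True
      have "0 \<le> q ^ Suc t * v"
        using \<open>q \<ge> 0\<close> \<open>0 \<le> v\<close> by simp
      with True \<open>c * \<alpha> t \<le> c * \<alpha> (Suc t)\<close> show ?thesis by linarith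
    next
      case False
      have "c * (v + k * \<alpha> t) \<le> c * (c * \<alpha> t + k * \<alpha> (Suc t))"
        using step[of t] Suc.prems \<open>0 < c\<close> by simp
      then have "v - c * \<alpha> (Suc t) \<le> (1 - c / k) * (v - c * \<alpha> t)"
        using \<open>0 < k\<close> by (simp add: field_simps)
      also have "\<dots> \<le> q * (v - c * \<alpha> t)"
        using False by (intro mult_right_mono) (auto simp: q_def)
      also have "\<dots> \<le> q * (q ^ t * v)"
        using IH \<open>q \<ge> 0\<close> by (rule mult_left_mono)
      finally show ?thesis by simp
    qed
  qed
  have "q \<le> exp (- c / k)"
    using exp_ge_add_one_self[of "- c / k"] by (simp add: q_def)
  then have "q ^ k \<le> exp (- c / k) ^ k"
    using \<open>q \<ge> 0\<close> by (rule power_mono)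
  also have "\<dots> = exp (- c)"
    using \<open>0 < k\<close> by (simp add: exp_of_nat_mult[symmetric])
  finally have "v - c * \<alpha> k \<le> exp (- c) * v"
    using gap[of k] \<open>0 \<le> v\<close> by (meson mult_right_mono order.trans order.refl)
  then show ?thesis by (simp add: algebra_simps)
qed

lemma recurrence_lower_bound_ennreal:
  fixes a :: "nat \<Rightarrow> ennreal" and v :: ennreal and c :: real
  assumes "0 < c" and "0 < k"
    and mono: "\<And>t. t < k \<Longrightarrow> a t \<le> a (Suc t)"
    and step: "\<And>t. t < k \<Longrightarrow> v + of_nat k * a t \<le> ennreal c * a t + of_nat k * a (Suc t)"
  shows "ennreal ((1 - exp (- c)) / c) * v \<le> a k"
proof (cases "a k = \<top>")
  case False
  have "a t \<le> a k" if "t \<le> k" for t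
    using that
  proof (induction rule: inc_induct)
    case (step t)
    then show ?case using mono[of t] by (meson order.trans)
  qed simp
  then have finite_a: "a t < \<top>" if "t \<le> k" for t
    using that False by (metis order.strict_trans1 top.not_eq_extremum)
  have "v \<le> v + of_nat k * a 0"
    by simp
  also have "\<dots> \<le> ennreal c * a 0 + of_nat k * a 1"
    using step[of 0] \<open>0 < k\<close> by simp
  also have "\<dots> < \<top>"
    using finite_a[of 0] finite_a[of 1] \<open>0 < k\<close> by (simp add: ennreal_mult_less_top of_nat_less_top)
  finally have "v < \<top>" .
  define \<alpha> where "\<alpha> t = enn2real (a t)" for t
  have a_eq: "a t = ennreal (\<alpha> t)" if "t \<le> k" for t
    using finite_a[OF that] by (simp add: \<alpha>_def)
  have "(1 - exp (- c)) * enn2real v \<le> c * \<alpha> k"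
  proof (rule recurrence_lower_bound[OF \<open>0 < c\<close> \<open>0 < k\<close>])
    fix t assume "t < k"
    then show "\<alpha> t \<le> \<alpha> (Suc t)"
      using mono[of t] finite_a[of "Suc t"] by (simp add: \<alpha>_def enn2real_mono)
    have "enn2real (v + of_nat k * a t) \<le> enn2real (ennreal c * a t + of_nat k * a (Suc t))"
      using step[OF \<open>t < k\<close>] finite_a[of t] finite_a[of "Suc t"] \<open>t < k\<close>
      by (intro enn2real_mono) (auto simp: ennreal_mult_less_top of_nat_less_top)
    then show "enn2real v + k * \<alpha> t \<le> c * \<alpha> t + k * \<alpha> (Suc t)"
      using \<open>v < \<top>\<close> finite_a[of t] finite_a[of "Suc t"] \<open>t < k\<close> \<open>0 < c\<close>
      by (simp add: \<alpha>_def enn2real_plus enn2real_mult ennreal_mult_less_top of_nat_less_top)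
  qed (simp_all add: \<alpha>_def)
  then have "(1 - exp (- c)) / c * enn2real v \<le> \<alpha> k"
    using \<open>0 < c\<close> by (simp add: field_simps)
  then have "ennreal ((1 - exp (- c)) / c * enn2real v) \<le> a k"
    using a_eq[of k] by (simp add: ennreal_leI)
  moreover have "ennreal ((1 - exp (- c)) / c * enn2real v) = ennreal ((1 - exp (- c)) / c) * v"
    using \<open>v < \<top>\<close> \<open>0 < c\<close> by (subst ennreal_mult) auto
  ultimately show ?thesis
    by simp
qed simp

lemma partial_state_nonneg:
  assumes "\<And>j. j \<in> T \<Longrightarrow> j \<in> {1..n} \<Longrightarrow> 0 \<le> x j"
  shows "partial_state n T x \<in> nonneg_vecs n"
  using assms by (auto simp: nonneg_vecs_def partial_state_def)

lemma monotone_submodular_nonneg: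
  "monotone_submodular n f \<Longrightarrow> x \<in> nonneg_vecs n \<Longrightarrow> 0 \<le> f x"
  by (simp add: monotone_submodular_def)

lemma monotone_submodular_mono:
  "monotone_submodular n f \<Longrightarrow> x \<in> nonneg_vecs n \<Longrightarrow> y \<in> nonneg_vecs n \<Longrightarrow>
    (\<And>j. j \<in> {1..n} \<Longrightarrow> x j \<le> y j) \<Longrightarrow> f x \<le> f y"
  by (simp add: monotone_submodular_def)

lemma monotone_submodular_le_join_meet:
  assumes f: "monotone_submodular n f"
    and vecs: "a \<in> nonneg_vecs n" "b \<in> nonneg_vecs n" "c \<in> nonneg_vecs n" "d \<in> nonneg_vecs n"
    and c: "\<And>j. j \<in> {1..n} \<Longrightarrow> c j \<le> max (a j) (b j)"
    and d: "\<And>j. j \<in> {1..n} \<Longrightarrow> d j \<le> min (a j) (b j)"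
  shows "f c + f d \<le> f a + f b"
proof -
  have "vjoin n a b \<in> nonneg_vecs n" and "vmeet n a b \<in> nonneg_vecs n"
    using vecs(1,2) by (auto simp: nonneg_vecs_def vjoin_def vmeet_def)
  then have "f c \<le> f (vjoin n a b)" and "f d \<le> f (vmeet n a b)"
    using f vecs(3,4) c d by (auto simp: monotone_submodular_def vjoin_def vmeet_def)
  moreover have "f (vjoin n a b) + f (vmeet n a b) \<le> f a + f b"
    using f vecs(1,2) by (simp add: monotone_submodular_def)
  ultimately show ?thesis by linarith
qed

lemma monotone_submodular_subadditive:
  assumes f: "monotone_submodular n f"
    and vecs: "a \<in> nonneg_vecs n" "b \<in> nonneg_vecs n" "c \<in> nonneg_vecs n"
    and "\<And>j. j \<in> {1..n} \<Longrightarrow> c j \<le> max (a j) (b j)"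
  shows "f c \<le> f a + f b"
proof -
  have zero: "(\<lambda>j\<in>{1..n}. 0) \<in> nonneg_vecs n"
    by (simp add: nonneg_vecs_def)
  have "f c + f (\<lambda>j\<in>{1..n}. 0) \<le> f a + f b"
    using vecs assms(5) vecs(1,2)[unfolded nonneg_vecs_def]
    by (intro monotone_submodular_le_join_meet[OF f _ _ _ zero]) auto
  moreover have "0 \<le> f (\<lambda>j\<in>{1..n}. 0)"
    using monotone_submodular_nonneg[OF f zero] .
  ultimately show ?thesis by linarith
qed

lemma partial_state_diminishing_returns:
  assumes f: "monotone_submodular n f" and "S \<subseteq> T"
    and x: "\<And>j. j \<in> {1..n} \<Longrightarrow> 0 \<le> x j"
  shows "f (partial_state n (insert i T) x) + f (partial_state n S x)
    \<le> f (partial_state n T x) + f (partial_state n (insert i S) x)"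
  using \<open>S \<subseteq> T\<close> x
  by (intro monotone_submodular_le_join_meet[OF f] partial_state_nonneg)
     (auto simp: partial_state_def)

primrec policy_run ::
  "(nat set \<times> (nat \<Rightarrow> real) \<Rightarrow> nat) \<Rightarrow> nat \<Rightarrow> nat set \<Rightarrow> (nat \<Rightarrow> real) \<Rightarrow> nat \<Rightarrow> nat set" where
  "policy_run \<pi> n A \<theta> 0 = A"
| "policy_run \<pi> n A \<theta> (Suc t) =
     insert (\<pi> (policy_run \<pi> n A \<theta> t, partial_state n (policy_run \<pi> n A \<theta> t) \<theta>))
            (policy_run \<pi> n A \<theta> t)"

lemma adaptive_set_eq_policy_run: "adaptive_set \<pi> n \<theta> t = policy_run \<pi> n {} \<theta> t"
  by (induction t) auto

lemma policy_run_Suc_shift: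
  "policy_run \<pi> n A \<theta> (Suc t) = policy_run \<pi> n (insert (\<pi> (A, partial_state n A \<theta>)) A) \<theta> t"
  by (induction t) auto

lemma override_on_insert_fun_upd:
  "i \<notin> B \<Longrightarrow> override_on \<theta> (z(i := y)) (insert i B) = override_on (\<theta>(i := y)) z B"
  by (auto simp: override_on_def)

locale stochastic_submodular =
  fixes n :: nat and M :: "nat \<Rightarrow> real measure" and f :: "(nat \<Rightarrow> real) \<Rightarrow> real"
  assumes prob_space_M: "\<forall>i\<in>{1..n}. prob_space (M i)"
    and sets_M: "\<forall>i\<in>{1..n}. sets (M i) = sets borel"
    and AE_M_nonneg: "\<forall>i\<in>{1..n}. AE x in M i. 0 \<le> x"
    and f_monotone_submodular: "monotone_submodular n f"
    and f_measurable: "f \<in> borel_measurable (PiM {1..n} (\<lambda>_. borel))"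
begin

abbreviation "P \<equiv> PiM {1..n} M"
abbreviation "F \<equiv> expected_value n M f"

lemma AE_P_nonneg: "AE \<theta> in P. \<forall>j\<in>{1..n}. 0 \<le> \<theta> j"
  using AE_PiM_component[of "{1..n}" M _ "\<lambda>x. 0 \<le> x"] prob_space_M AE_M_nonneg
  by (simp add: AE_finite_all)

lemma space_M: "i \<in> {1..n} \<Longrightarrow> space (M i) = UNIV"
  using sets_M sets_eq_imp_space_eq by fastforce

lemma measurable_f_partial_state_override:
  "(\<lambda>\<theta>. ennreal (f (partial_state n T (override_on \<theta> z B)))) \<in> borel_measurable P"
proof -
  have "(\<lambda>\<theta>. \<theta> j) \<in> borel_measurable P" if "j \<in> {1..n}" for j
    using measurable_component_singleton[OF that, of M] sets_M that
    by (metis measurable_cong_sets)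
  then have "(\<lambda>\<theta>. partial_state n T (override_on \<theta> z B)) \<in> measurable P (PiM {1..n} (\<lambda>_. borel))"
    unfolding partial_state_def override_on_def by (intro measurable_restrict) auto
  from measurable_compose[OF this f_measurable] show ?thesis
    by measurable
qed

lemma nn_integral_P_fun_upd:
  assumes "i \<in> {1..n}" and "g \<in> borel_measurable P"
  shows "(\<lambda>y. \<integral>\<^sup>+\<theta>. g (\<theta>(i := y)) \<partial>P) \<in> borel_measurable (M i)"
    and "(\<integral>\<^sup>+y. \<integral>\<^sup>+\<theta>. g (\<theta>(i := y)) \<partial>P \<partial>M i) = (\<integral>\<^sup>+\<theta>. g \<theta> \<partial>P)"
  using nn_integral_PiM_fun_upd[of "{1..n}" i M g] assms prob_space_M by auto

lemma expected_value_mono: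
  assumes "T \<subseteq> T'"
  shows "F T \<le> F T'"
  unfolding expected_value_def
proof (rule nn_integral_mono_AE)
  show "AE \<theta> in P. ennreal (f (partial_state n T \<theta>)) \<le> ennreal (f (partial_state n T' \<theta>))"
    using AE_P_nonneg
  proof eventually_elim
    case (elim \<theta>)
    then show ?case
      using assms
      by (intro ennreal_leI monotone_submodular_mono[OF f_monotone_submodular] partial_state_nonneg)
         (auto simp: partial_state_def)
  qed
qed

definition cond_value :: "nat set \<Rightarrow> nat set \<Rightarrow> (nat \<Rightarrow> real) \<Rightarrow> ennreal" where
  "cond_value T B z = (\<integral>\<^sup>+\<theta>. ennreal (f (partial_state n T (override_on \<theta> z B))) \<partial>P)"

lemma cond_value_empty [simp]: "cond_value T {} z = F T"
  by (simp add: cond_value_def expected_value_def)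

lemma cond_value_fun_upd_notin:
  assumes "i \<notin> B"
  shows "cond_value T B (z(i := y)) = cond_value T B z"
proof -
  have "override_on \<theta> (z(i := y)) B = override_on \<theta> z B" for \<theta>
    using assms by (auto simp: override_on_def)
  then show ?thesis
    by (simp add: cond_value_def)
qed

lemma nn_integral_cond_value_insert:
  assumes "i \<in> {1..n}" and "i \<notin> B"
  shows "(\<integral>\<^sup>+y. cond_value T (insert i B) (z(i := y)) \<partial>M i) = cond_value T B z"
  using nn_integral_P_fun_upd(2)[OF assms(1) measurable_f_partial_state_override] assms(2)
  by (simp add: cond_value_def override_on_insert_fun_upd)

lemma measurable_cond_value_fun_upd:
  assumes "i \<in> {1..n}"
  shows "(\<lambda>y. cond_value T B (z(i := y))) \<in> borel_measurable (M i)"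
proof (cases "i \<in> B")
  case True
  define B' where "B' = B - {i}"
  have "B = insert i B'" and "i \<notin> B'"
    using True by (auto simp: B'_def)
  then show ?thesis
    using nn_integral_P_fun_upd(1)[OF assms measurable_f_partial_state_override[of T z B']]
    by (simp add: cond_value_def override_on_insert_fun_upd)
qed (simp add: cond_value_fun_upd_notin)

lemma cond_value_diminishing_returns:
  assumes "S \<subseteq> T" and "\<forall>j\<in>B. 0 \<le> z j"
  shows "cond_value (insert i T) B z + cond_value S B z \<le> cond_value T B z + cond_value (insert i S) B z"
proof -
  define g where "g = (\<lambda>T \<theta>. ennreal (f (partial_state n T (override_on \<theta> z B))))"
  have g_measurable: "g T \<in> borel_measurable P" for T
    unfolding g_def by (rule measurable_f_partial_state_override)
  have "AE \<theta> in P. g (insert i T) \<theta> + g S \<theta> \<le> g T \<theta> + g (insert i S) \<theta>"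
    using AE_P_nonneg
  proof eventually_elim
    case (elim \<theta>)
    then have x: "\<And>j. j \<in> {1..n} \<Longrightarrow> 0 \<le> override_on \<theta> z B j"
      using assms(2) by (auto simp: override_on_def)
    have "\<And>T. 0 \<le> f (partial_state n T (override_on \<theta> z B))"
      by (intro monotone_submodular_nonneg[OF f_monotone_submodular] partial_state_nonneg x)
    with partial_state_diminishing_returns[OF f_monotone_submodular assms(1) x, where i = i]
    show ?case
      by (simp add: g_def flip: ennreal_plus)
  qed
  then have "(\<integral>\<^sup>+\<theta>. g (insert i T) \<theta> + g S \<theta> \<partial>P) \<le> (\<integral>\<^sup>+\<theta>. g T \<theta> + g (insert i S) \<theta> \<partial>P)"
    by (rule nn_integral_mono_AE)
  moreover have "cond_value T B z = integral\<^sup>N P (g T)" for T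
    by (simp add: cond_value_def g_def)
  ultimately show ?thesis
    by (simp only: nn_integral_add[OF g_measurable g_measurable])
qed

lemma cond_value_disjoint: "B \<inter> T = {} \<Longrightarrow> cond_value T B z = F T"
  unfolding cond_value_def expected_value_def
  by (intro nn_integral_cong arg_cong[where f = "\<lambda>x. ennreal (f x)"])
     (auto simp: partial_state_def override_on_def fun_eq_iff)

lemma nn_integral_cond_value_exchange:
  assumes "i \<in> {1..n}" and "i \<notin> A" and "\<forall>j\<in>A. 0 \<le> z j"
  shows "(\<integral>\<^sup>+y. cond_value (S \<union> insert i A) (insert i A - S) (z(i := y)) \<partial>M i) + F S
    \<le> cond_value (S \<union> A) (A - S) z + F (insert i S)"
proof -
  interpret prob_space "M i"
    using prob_space_M assms(1) by blast
  show ?thesis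
  proof (cases "i \<in> S")
    case True
    then have "S \<union> insert i A = S \<union> A" "insert i A - S = A - S" "insert i S = S"
      by auto
    with True show ?thesis
      by (simp add: cond_value_fun_upd_notin emeasure_space_1)
  next
    case False
    then have "(\<integral>\<^sup>+y. cond_value (S \<union> insert i A) (insert i A - S) (z(i := y)) \<partial>M i)
        = cond_value (insert i (S \<union> A)) (A - S) z"
      using assms(1,2) nn_integral_cond_value_insert[of i "A - S"] by (simp add: insert_Diff_if)
    moreover have "F S = cond_value S (A - S) z"
      by (rule cond_value_disjoint[symmetric]) auto
    ultimately have "(\<integral>\<^sup>+y. cond_value (S \<union> insert i A) (insert i A - S) (z(i := y)) \<partial>M i) + F S
        = cond_value (insert i (S \<union> A)) (A - S) z + cond_value S (A - S) z"
      by simp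
    also have "\<dots> \<le> cond_value (S \<union> A) (A - S) z + cond_value (insert i S) (A - S) z"
      using assms(3) by (intro cond_value_diminishing_returns) auto
    also have "\<dots> = cond_value (S \<union> A) (A - S) z + F (insert i S)"
      using assms(2) by (subst cond_value_disjoint) auto
    finally show ?thesis .
  qed
qed

definition policy_outcome ::
  "(nat set \<times> (nat \<Rightarrow> real) \<Rightarrow> nat) \<Rightarrow> nat set \<Rightarrow> (nat \<Rightarrow> real) \<Rightarrow> nat \<Rightarrow> (nat \<Rightarrow> real) \<Rightarrow> ennreal"
  where "policy_outcome \<pi> A z m \<theta> =
    ennreal (f (partial_state n (policy_run \<pi> n A (override_on \<theta> z A) m) (override_on \<theta> z A)))"

lemma policy_outcome_Suc_fun_upd:
  assumes "i = \<pi> (A, partial_state n A z)" and "i \<notin> A"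
  shows "policy_outcome \<pi> A z (Suc m) (\<theta>(i := y)) = policy_outcome \<pi> (insert i A) (z(i := y)) m \<theta>"
proof -
  let ?x = "override_on (\<theta>(i := y)) z A"
  have "partial_state n A ?x = partial_state n A z"
    by (auto simp: partial_state_def fun_eq_iff)
  then have "policy_run \<pi> n A ?x (Suc m) = policy_run \<pi> n (insert i A) ?x m"
    by (simp only: policy_run_Suc_shift assms(1))
  then show ?thesis
    by (simp only: policy_outcome_def override_on_insert_fun_upd[OF assms(2)])
qed

lemma nn_integral_policy_outcome_0:
  assumes "\<forall>j\<in>A. 0 \<le> z j"
  shows "(\<integral>\<^sup>+\<theta>. policy_outcome \<pi> A z 0 \<theta> \<partial>P) \<le> cond_value S A z + cond_value (S \<union> A) (A - S) z"
proof -
  have "AE \<theta> in P. policy_outcome \<pi> A z 0 \<theta>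
      \<le> ennreal (f (partial_state n S (override_on \<theta> z A)))
        + ennreal (f (partial_state n (S \<union> A) (override_on \<theta> z (A - S))))"
    using AE_P_nonneg
  proof eventually_elim
    case (elim \<theta>)
    have "0 \<le> override_on \<theta> z B j" if "B \<subseteq> A" "j \<in> {1..n}" for B j
      using elim assms that by (auto simp: override_on_def)
    then have nonneg: "partial_state n T (override_on \<theta> z B) \<in> nonneg_vecs n" if "B \<subseteq> A" for T B
      using that by (intro partial_state_nonneg)
    have "f (partial_state n A (override_on \<theta> z A))
        \<le> f (partial_state n S (override_on \<theta> z A)) + f (partial_state n (S \<union> A) (override_on \<theta> z (A - S)))"
      using elim
      by (intro monotone_submodular_subadditive[OF f_monotone_submodular] nonneg)
         (auto simp: partial_state_def override_on_def)
    moreover have "0 \<le> f (partial_state n T (override_on \<theta> z B))" if "B \<subseteq> A" for T B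
      using monotone_submodular_nonneg[OF f_monotone_submodular nonneg[OF that]] .
    ultimately show ?case
      by (simp add: policy_outcome_def flip: ennreal_plus)
  qed
  then have "(\<integral>\<^sup>+\<theta>. policy_outcome \<pi> A z 0 \<theta> \<partial>P)
      \<le> (\<integral>\<^sup>+\<theta>. ennreal (f (partial_state n S (override_on \<theta> z A)))
        + ennreal (f (partial_state n (S \<union> A) (override_on \<theta> z (A - S)))) \<partial>P)"
    by (rule nn_integral_mono_AE)
  also have "\<dots> = cond_value S A z + cond_value (S \<union> A) (A - S) z"
    unfolding cond_value_def by (intro nn_integral_add measurable_f_partial_state_override)
  finally show ?thesis .
qed

lemma nn_integral_policy_outcome_Suc:
  assumes i: "i = \<pi> (A, partial_state n A z)" "i \<in> {1..n}" "i \<notin> A"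
    and z: "\<forall>j\<in>A. 0 \<le> z j" and G: "F (insert i S) \<le> G"
    and measurable: "policy_outcome \<pi> A z (Suc m) \<in> borel_measurable P"
    and IH: "\<And>y. 0 \<le> y \<Longrightarrow> policy_outcome \<pi> (insert i A) (z(i := y)) m \<in> borel_measurable P \<Longrightarrow>
      (\<integral>\<^sup>+\<theta>. policy_outcome \<pi> (insert i A) (z(i := y)) m \<theta> \<partial>P) + of_nat m * F S
        \<le> cond_value S (insert i A) (z(i := y))
          + cond_value (S \<union> insert i A) (insert i A - S) (z(i := y)) + of_nat m * G"
  shows "(\<integral>\<^sup>+\<theta>. policy_outcome \<pi> A z (Suc m) \<theta> \<partial>P) + of_nat (Suc m) * F S
    \<le> cond_value S A z + cond_value (S \<union> A) (A - S) z + of_nat (Suc m) * G"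
proof -
  interpret prob_space "M i"
    using prob_space_M i(2) by blast
  note outcome_upd = policy_outcome_Suc_fun_upd[where \<pi> = \<pi> and A = A and z = z, OF i(1,3)]
  define V where "V = (\<lambda>y. \<integral>\<^sup>+\<theta>. policy_outcome \<pi> (insert i A) (z(i := y)) m \<theta> \<partial>P)"
  define T1 where "T1 = (\<lambda>y. cond_value S (insert i A) (z(i := y)))"
  define T2 where "T2 = (\<lambda>y. cond_value (S \<union> insert i A) (insert i A - S) (z(i := y)))"
  have V: "V \<in> borel_measurable (M i)" "(\<integral>\<^sup>+y. V y \<partial>M i) = (\<integral>\<^sup>+\<theta>. policy_outcome \<pi> A z (Suc m) \<theta> \<partial>P)"
    using nn_integral_P_fun_upd[OF i(2) measurable] by (simp_all only: V_def outcome_upd)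
  have T: "T1 \<in> borel_measurable (M i)" "T2 \<in> borel_measurable (M i)"
    unfolding T1_def T2_def by (intro measurable_cond_value_fun_upd i(2))+
  have "AE y in M i. 0 \<le> y"
    using AE_M_nonneg i(2) by blast
  then have V_bound: "AE y in M i. V y + of_nat m * F S \<le> T1 y + T2 y + of_nat m * G"
  proof (rule eventually_mono)
    fix y :: real assume "0 \<le> y"
    have "(\<lambda>\<theta>. policy_outcome \<pi> A z (Suc m) (\<theta>(i := y))) \<in> borel_measurable P"
      using i(2) space_M[OF i(2)]
      by (intro measurable_compose[OF measurable_fun_upd_const measurable]) auto
    then show "V y + of_nat m * F S \<le> T1 y + T2 y + of_nat m * G"
      unfolding V_def T1_def T2_def using \<open>0 \<le> y\<close> by (intro IH) (simp_all only: outcome_upd)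
  qed
  have T2_bound: "(\<integral>\<^sup>+y. T2 y \<partial>M i) + F S \<le> cond_value (S \<union> A) (A - S) z + G"
    unfolding T2_def
    using nn_integral_cond_value_exchange[OF i(2,3) z] add_left_mono[OF G]
    by (rule order.trans)
  have "(\<integral>\<^sup>+\<theta>. policy_outcome \<pi> A z (Suc m) \<theta> \<partial>P) + of_nat (Suc m) * F S
      = (\<integral>\<^sup>+y. V y \<partial>M i) + of_nat m * F S + F S"
    by (simp add: V(2) algebra_simps)
  also have "(\<integral>\<^sup>+y. V y \<partial>M i) + of_nat m * F S = (\<integral>\<^sup>+y. V y + of_nat m * F S \<partial>M i)"
    using V(1) by (simp add: nn_integral_add emeasure_space_1)
  also have "\<dots> \<le> (\<integral>\<^sup>+y. T1 y + T2 y + of_nat m * G \<partial>M i)"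
    using V_bound by (rule nn_integral_mono_AE)
  also have "\<dots> = cond_value S A z + (\<integral>\<^sup>+y. T2 y \<partial>M i) + of_nat m * G"
    using T i(2,3) by (simp add: nn_integral_add emeasure_space_1 T1_def nn_integral_cond_value_insert)
  also have "\<dots> + F S = cond_value S A z + ((\<integral>\<^sup>+y. T2 y \<partial>M i) + F S) + of_nat m * G"
    by (simp add: ac_simps)
  also have "\<dots> \<le> cond_value S A z + (cond_value (S \<union> A) (A - S) z + G) + of_nat m * G"
    using add_right_mono[OF add_left_mono[OF T2_bound]] .
  finally show ?thesis
    by (simp add: algebra_simps)
qed

lemma nn_integral_policy_outcome_le:
  assumes \<pi>: "valid_policy n k \<pi>" and G: "\<And>i. i \<in> {1..n} \<Longrightarrow> F (insert i S) \<le> G"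
  shows "A \<subseteq> {1..n} \<Longrightarrow> card A + m \<le> k \<Longrightarrow> \<forall>j\<in>A. 0 \<le> z j \<Longrightarrow>
    policy_outcome \<pi> A z m \<in> borel_measurable P \<Longrightarrow>
    (\<integral>\<^sup>+\<theta>. policy_outcome \<pi> A z m \<theta> \<partial>P) + of_nat m * F S
      \<le> cond_value S A z + cond_value (S \<union> A) (A - S) z + of_nat m * G"
proof (induction m arbitrary: A z)
  case 0
  then show ?case
    using nn_integral_policy_outcome_0 by simp
next
  case (Suc m)
  define i where "i = \<pi> (A, partial_state n A z)"
  have "finite A" and "card A < k"
    using Suc.prems(1,2) finite_subset by auto
  then have i: "i \<in> {1..n}" "i \<notin> A"
    using \<pi> Suc.prems(1) by (auto simp: valid_policy_def i_def)
  show ?case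
  proof (rule nn_integral_policy_outcome_Suc[OF i_def i Suc.prems(3) G[OF i(1)] Suc.prems(4)])
    fix y :: real
    assume "0 \<le> y" and measurable: "policy_outcome \<pi> (insert i A) (z(i := y)) m \<in> borel_measurable P"
    show "(\<integral>\<^sup>+\<theta>. policy_outcome \<pi> (insert i A) (z(i := y)) m \<theta> \<partial>P) + of_nat m * F S
        \<le> cond_value S (insert i A) (z(i := y))
          + cond_value (S \<union> insert i A) (insert i A - S) (z(i := y)) + of_nat m * G"
      using Suc.prems \<open>finite A\<close> i \<open>0 \<le> y\<close> by (intro Suc.IH[OF _ _ _ measurable]) auto
  qed
qed

lemma adaptive_value_bound:
  assumes "\<pi> \<in> admissible_policies n M f k" and "\<And>i. i \<in> {1..n} \<Longrightarrow> F (insert i S) \<le> G"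
  shows "adaptive_value n M f k \<pi> + of_nat k * F S \<le> 2 * F S + of_nat k * G"
proof -
  have outcome: "policy_outcome \<pi> {} z k = (\<lambda>\<theta>. ennreal (f (partial_state n (adaptive_set \<pi> n \<theta> k) \<theta>)))" for z
    by (simp add: policy_outcome_def adaptive_set_eq_policy_run fun_eq_iff)
  have "valid_policy n k \<pi>"
    and [measurable]: "(\<lambda>\<theta>. f (partial_state n (adaptive_set \<pi> n \<theta> k) \<theta>)) \<in> borel_measurable P"
    using assms(1) by (auto simp: admissible_policies_def)
  then have "(\<integral>\<^sup>+\<theta>. policy_outcome \<pi> {} (\<lambda>_. 0) k \<theta> \<partial>P) + of_nat k * F S
      \<le> cond_value S {} (\<lambda>_. 0) + cond_value (S \<union> {}) ({} - S) (\<lambda>_. 0) + of_nat k * G"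
    by (intro nn_integral_policy_outcome_le assms(2)) (auto simp: outcome)
  then show ?thesis
    by (simp add: outcome adaptive_value_def mult_2)
qed

lemma OPT_A_bound:
  assumes "F S \<le> G" and "\<And>i. i \<in> {1..n} \<Longrightarrow> F (insert i S) \<le> G"
  shows "OPT_A n M f k + of_nat k * F S \<le> 2 * F S + of_nat k * G"
proof (cases "admissible_policies n M f k = {}")
  case True
  then show ?thesis
    using mult_left_mono[OF assms(1), of "of_nat k"] by (simp add: OPT_A_def add_increasing)
next
  case False
  then have "OPT_A n M f k + of_nat k * F S
      = (SUP \<pi>\<in>admissible_policies n M f k. adaptive_value n M f k \<pi> + of_nat k * F S)"
    unfolding OPT_A_def by (rule ennreal_SUP_add_left[symmetric])
  also have "\<dots> \<le> 2 * F S + of_nat k * G"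
    by (intro SUP_least adaptive_value_bound assms(2))
  finally show ?thesis .
qed

lemma nonadaptive_greedy_step:
  assumes "is_nonadaptive_greedy n M f k S" and "t < k"
  shows "F (S t) \<le> F (S (Suc t))"
    and "OPT_A n M f k + of_nat k * F (S t) \<le> 2 * F (S t) + of_nat k * F (S (Suc t))"
proof -
  obtain i where S_Suc: "S (Suc t) = insert i (S t)"
    and greedy: "\<And>j. j \<in> {1..n} - S t \<Longrightarrow> F (insert j (S t)) \<le> F (S (Suc t))"
    using assms unfolding is_nonadaptive_greedy_def by (metis atLeastAtMost_iff diff_Suc_1 le_add1 less_eq_Suc_le plus_1_eq_Suc)
  show mono: "F (S t) \<le> F (S (Suc t))"
    unfolding S_Suc by (intro expected_value_mono) auto
  have "F (insert j (S t)) \<le> F (S (Suc t))" if "j \<in> {1..n}" for j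
    using greedy[of j] mono that by (cases "j \<in> S t") (auto simp: insert_absorb)
  with mono show "OPT_A n M f k + of_nat k * F (S t) \<le> 2 * F (S t) + of_nat k * F (S (Suc t))"
    by (rule OPT_A_bound)
qed

end

theorem theorem1:
  fixes n k :: nat
    and M :: "nat \<Rightarrow> real measure"
    and f :: "(nat \<Rightarrow> real) \<Rightarrow> real"
    and S :: "nat \<Rightarrow> nat set"
  assumes "\<forall>i\<in>{1..n}. prob_space (M i)"
    and "\<forall>i\<in>{1..n}. sets (M i) = sets borel"
    and "\<forall>i\<in>{1..n}. AE x in M i. 0 \<le> x"
    and "monotone_submodular n f"
    and "f \<in> borel_measurable (PiM {1..n} (\<lambda>_. borel))"
    and "k \<in> {1..n}"
    and "is_nonadaptive_greedy n M f k S"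
  shows "ennreal ((1 - 1 / exp 2) / 2) * OPT_A n M f k \<le> expected_value n M f (S k)"
proof -
  interpret stochastic_submodular n M f
    using assms(1-5) by unfold_locales
  have "ennreal ((1 - exp (- 2)) / 2) * OPT_A n M f k \<le> F (S k)"
    using nonadaptive_greedy_step[OF assms(7)] assms(6)
    by (intro recurrence_lower_bound_ennreal[where c = 2]) simp_all
  then show ?thesis
    by (simp add: exp_minus inverse_eq_divide)
qed

end
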